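(* Let $d_v\in\{2,3\}$, $L>0$, and consider $n$ particles with positions $x_p\in[0,L)$ (periodic), velocities $v_p\in\mathbb{R}^{d_v}$ and weights $w_p>0$, $p=1,\dots,n$. Let $s:[0,L)\times\mathbb{R}^{d_v}\to\mathbb{R}^{d_v}$ be an arbitrary function (a score approximation), let $\psi_\eta$ be a symmetric nonnegative spatial kernel, and define for each $p$ \[ U^\eta(x_p,v_p) = \sum_{q=1}^n w_q\,\psi_\eta(x_p-x_q)\,A(v_p-v_q)\big[s(x_p,v_p) - s(x_q,v_q)\big], \] where $A(z) = |z|^{\gamma+2}\big(I_{d_v} - zz^\top/|z|^2\big)$. Then, for any $\nu\ge 0$: (i) (conservation of momentum and energy) \[ \sum_p w_p\,U^\eta(x_p,v_p) = 0,\qquad \sum_p w_p\, v_p\cdot U^\eta(x_p,v_p) = 0; \] (ii) (estimated entropy dissipation) \[ -\nu\sum_p w_p\, s(x_p,v_p)\cdot U^\eta(x_p,v_p) \le 0. \]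
   Context: $\gamma$ is a real exponent (the Coulomb case is $\gamma=-d_v$). Terms with $v_p=v_q$ in the sum defining $U^\eta$ are taken to be zero (where $A(0)$ is undefined). The kernel $\psi_\eta$ is evaluated on periodic differences of positions and satisfies $\psi_\eta(y)=\psi_\eta(-y)\ge 0$; a typical choice is the hat function $\psi_\eta(x)=\frac1\eta\big(1-\frac{|x|}{\eta}\big)_+$ with $\eta=L/M$. *)

theory Defs
  imports "HOL-Analysis.Analysis"
begin

definition landau_A :: "real \<Rightarrow> real^'d \<Rightarrow> real^'d^'d" where
  "landau_A \<gamma> z = (norm z powr (\<gamma> + 2)) *\<^sub>R
      (mat 1 - (\<chi> i j. z $ i * z $ j / (norm z)\<^sup>2))"

definition U_eta ::
  "nat \<Rightarrow> (nat \<Rightarrow> real) \<Rightarrow> (nat \<Rightarrow> real^'d) \<Rightarrow> (nat \<Rightarrow> real)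
   \<Rightarrow> (real \<Rightarrow> real) \<Rightarrow> real \<Rightarrow> (real \<Rightarrow> real^'d \<Rightarrow> real^'d) \<Rightarrow> nat \<Rightarrow> real^'d" where
  "U_eta n x v w \<psi> \<gamma> s p =
     (\<Sum>q<n. if v p = v q then 0
             else (w q * \<psi> (x p - x q)) *\<^sub>R
                  (landau_A \<gamma> (v p - v q) *v (s (x p) (v p) - s (x q) (v q))))"

end

theory Submission
  imports Defs
begin

text \<open>Write \<open>F p q\<close> for the \<open>q\<close>-th summand of \<open>w\<^sub>p U\<^sup>\<eta>(x\<^sub>p, v\<^sub>p)\<close>. Since \<open>A(-z) = A(z)\<close> and
  \<open>\<psi>\<^sub>\<eta>\<close> is even, \<open>F\<close> is antisymmetric, which gives conservation of momentum. Symmetrising,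
  \<open>2 \<Sum>\<^sub>p g\<^sub>p \<bullet> w\<^sub>p U\<^sup>\<eta>(x\<^sub>p, v\<^sub>p) = \<Sum>\<^sub>p\<^sub>,\<^sub>q (g\<^sub>p - g\<^sub>q) \<bullet> F p q\<close> for any \<open>g\<close>. For \<open>g = v\<close> every
  summand vanishes because \<open>A(z)\<close> annihilates \<open>z\<close>; for \<open>g = s\<close> every summand is a
  nonnegative multiple of a quadratic form of the positive semidefinite \<open>A(v\<^sub>p - v\<^sub>q)\<close>.
  Neither the dimension nor the periodic setting of the positions plays any role.\<close>

lemma projection_matrix_mult_vec:
  fixes z y :: "real^'d"
  shows "(\<chi> i j. z $ i * z $ j / (norm z)\<^sup>2) *v y = ((z \<bullet> y) / (norm z)\<^sup>2) *\<^sub>R z"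
  by (simp add: vec_eq_iff matrix_vector_mult_def inner_vec_def sum_distrib_left
      sum_divide_distrib mult_ac)

lemma landau_A_mult_vec:
  "landau_A \<gamma> z *v y = norm z powr (\<gamma> + 2) *\<^sub>R (y - ((z \<bullet> y) / (norm z)\<^sup>2) *\<^sub>R z)"
  by (simp add: landau_A_def scaleR_matrix_vector_assoc[symmetric]
      matrix_vector_mult_diff_rdistrib projection_matrix_mult_vec)

lemma landau_A_minus: "landau_A \<gamma> (- z) = landau_A \<gamma> z"
  by (simp add: landau_A_def)

lemma inner_landau_A_mult_vec_self_eq_0:
  assumes "z \<noteq> 0"
  shows "z \<bullet> (landau_A \<gamma> z *v y) = 0"
  using assms by (simp add: landau_A_mult_vec inner_diff_right power2_norm_eq_inner)

lemma inner_landau_A_mult_vec_nonneg: "0 \<le> y \<bullet> (landau_A \<gamma> z *v y)"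
proof (cases "z = 0")
  case True
  then show ?thesis by (simp add: landau_A_mult_vec)
next
  case False
  have "(z \<bullet> y)\<^sup>2 \<le> (norm z)\<^sup>2 * (norm y)\<^sup>2"
    using Cauchy_Schwarz_ineq by (simp add: power2_norm_eq_inner)
  with False have "(z \<bullet> y)\<^sup>2 / (norm z)\<^sup>2 \<le> y \<bullet> y"
    by (simp add: divide_le_eq power2_norm_eq_inner mult.commute)
  then show ?thesis
    by (simp add: landau_A_mult_vec inner_diff_right inner_commute power2_eq_square)
qed

lemma sum_sum_add_swap:
  fixes f :: "'a \<Rightarrow> 'a \<Rightarrow> 'b::comm_monoid_add"
  shows "(\<Sum>p\<in>I. \<Sum>q\<in>I. f p q) + (\<Sum>p\<in>I. \<Sum>q\<in>I. f p q) = (\<Sum>p\<in>I. \<Sum>q\<in>I. f p q + f q p)"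
  by (subst (2) sum.swap) (simp add: sum.distrib)

lemma sum_sum_antisym_eq_0:
  fixes F :: "'a \<Rightarrow> 'a \<Rightarrow> 'b::real_vector"
  assumes antisym: "\<And>p q. F q p = - F p q"
  shows "(\<Sum>p\<in>I. \<Sum>q\<in>I. F p q) = 0"
proof -
  have "F p q + F q p = 0" for p q
    by (simp add: antisym[of p q])
  then have "2 *\<^sub>R (\<Sum>p\<in>I. \<Sum>q\<in>I. F p q) = 0"
    by (simp add: scaleR_2 sum_sum_add_swap)
  then show ?thesis by simp
qed

lemma sum_sum_inner_antisym:
  fixes F :: "'a \<Rightarrow> 'a \<Rightarrow> 'b::real_inner"
  assumes antisym: "\<And>p q. F q p = - F p q"
  shows "2 * (\<Sum>p\<in>I. \<Sum>q\<in>I. g p \<bullet> F p q) = (\<Sum>p\<in>I. \<Sum>q\<in>I. (g p - g q) \<bullet> F p q)"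
proof -
  have "g p \<bullet> F p q + g q \<bullet> F q p = (g p - g q) \<bullet> F p q" for p q
    by (simp add: antisym[of p q] inner_diff_left)
  then show ?thesis
    by (simp add: mult_2 sum_sum_add_swap)
qed

definition landau_pair_flux ::
  "(nat \<Rightarrow> real) \<Rightarrow> (nat \<Rightarrow> real^'d) \<Rightarrow> (nat \<Rightarrow> real)
   \<Rightarrow> (real \<Rightarrow> real) \<Rightarrow> real \<Rightarrow> (real \<Rightarrow> real^'d \<Rightarrow> real^'d) \<Rightarrow> nat \<Rightarrow> nat \<Rightarrow> real^'d" where
  "landau_pair_flux x v w \<psi> \<gamma> s p q =
     (if v p = v q then 0
      else (w p * w q * \<psi> (x p - x q)) *\<^sub>R
           (landau_A \<gamma> (v p - v q) *v (s (x p) (v p) - s (x q) (v q))))"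

lemma scaleR_U_eta_eq_sum_landau_pair_flux:
  "w p *\<^sub>R U_eta n x v w \<psi> \<gamma> s p = (\<Sum>q<n. landau_pair_flux x v w \<psi> \<gamma> s p q)"
  unfolding U_eta_def landau_pair_flux_def scaleR_sum_right
  by (intro sum.cong) (simp_all add: mult.assoc)

lemma inner_U_eta_eq_sum_landau_pair_flux:
  "w p * (g \<bullet> U_eta n x v w \<psi> \<gamma> s p) = (\<Sum>q<n. g \<bullet> landau_pair_flux x v w \<psi> \<gamma> s p q)"
proof -
  have "w p * (g \<bullet> U_eta n x v w \<psi> \<gamma> s p) = g \<bullet> (w p *\<^sub>R U_eta n x v w \<psi> \<gamma> s p)"
    by simp
  then show ?thesis
    by (simp only: scaleR_U_eta_eq_sum_landau_pair_flux inner_sum_right)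
qed

lemma landau_pair_flux_antisym:
  assumes "\<And>y. \<psi> y = \<psi> (- y)"
  shows "landau_pair_flux x v w \<psi> \<gamma> s q p = - landau_pair_flux x v w \<psi> \<gamma> s p q"
proof -
  have "landau_A \<gamma> (v q - v p) = landau_A \<gamma> (v p - v q)"
    by (metis landau_A_minus minus_diff_eq)
  moreover have "\<psi> (x q - x p) = \<psi> (x p - x q)"
    by (metis assms minus_diff_eq)
  ultimately show ?thesis
    by (auto simp: landau_pair_flux_def matrix_vector_mult_diff_distrib algebra_simps)
qed

lemma inner_landau_pair_flux_velocity_eq_0:
  "(v p - v q) \<bullet> landau_pair_flux x v w \<psi> \<gamma> s p q = 0"
  by (simp add: landau_pair_flux_def inner_landau_A_mult_vec_self_eq_0)

lemma inner_landau_pair_flux_score_nonneg: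
  assumes "0 \<le> w p" "0 \<le> w q" "\<And>y. 0 \<le> \<psi> y"
  shows "0 \<le> (s (x p) (v p) - s (x q) (v q)) \<bullet> landau_pair_flux x v w \<psi> \<gamma> s p q"
  using assms by (simp add: landau_pair_flux_def inner_landau_A_mult_vec_nonneg)

theorem theorem3:
  fixes n :: nat and L \<gamma> \<nu> :: real
    and x :: "nat \<Rightarrow> real" and v :: "nat \<Rightarrow> real^'d" and w :: "nat \<Rightarrow> real"
    and \<psi> :: "real \<Rightarrow> real" and s :: "real \<Rightarrow> real^'d \<Rightarrow> real^'d"
  assumes dim: "CARD('d) = 2 \<or> CARD('d) = 3"
    and L_pos: "L > 0"
    and x_range: "\<And>p. p < n \<Longrightarrow> 0 \<le> x p \<and> x p < L"
    and w_pos: "\<And>p. p < n \<Longrightarrow> w p > 0"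
    and psi_sym: "\<And>y. \<psi> y = \<psi> (- y)"
    and psi_nonneg: "\<And>y. \<psi> y \<ge> 0"
    and nu_nonneg: "\<nu> \<ge> 0"
  shows "(\<Sum>p<n. w p *\<^sub>R U_eta n x v w \<psi> \<gamma> s p) = 0
       \<and> (\<Sum>p<n. w p * (v p \<bullet> U_eta n x v w \<psi> \<gamma> s p)) = 0
       \<and> - \<nu> * (\<Sum>p<n. w p * (s (x p) (v p) \<bullet> U_eta n x v w \<psi> \<gamma> s p)) \<le> 0"
proof -
  let ?F = "landau_pair_flux x v w \<psi> \<gamma> s"
  have antisym: "?F q p = - ?F p q" for p q
    using psi_sym by (rule landau_pair_flux_antisym)
  have momentum: "(\<Sum>p<n. w p *\<^sub>R U_eta n x v w \<psi> \<gamma> s p) = 0"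
    using sum_sum_antisym_eq_0[OF antisym]
    by (simp add: scaleR_U_eta_eq_sum_landau_pair_flux)
  have "2 * (\<Sum>p<n. w p * (v p \<bullet> U_eta n x v w \<psi> \<gamma> s p)) = 0"
    using sum_sum_inner_antisym[OF antisym, where g = v and I = "{..<n}"]
    by (simp add: inner_U_eta_eq_sum_landau_pair_flux inner_landau_pair_flux_velocity_eq_0)
  then have energy: "(\<Sum>p<n. w p * (v p \<bullet> U_eta n x v w \<psi> \<gamma> s p)) = 0"
    by simp
  have "0 \<le> (\<Sum>p<n. \<Sum>q<n. (s (x p) (v p) - s (x q) (v q)) \<bullet> ?F p q)"
    using w_pos psi_nonneg
    by (intro sum_nonneg inner_landau_pair_flux_score_nonneg) (auto intro: less_imp_le)
  also have "\<dots> = 2 * (\<Sum>p<n. w p * (s (x p) (v p) \<bullet> U_eta n x v w \<psi> \<gamma> s p))"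
    using sum_sum_inner_antisym[OF antisym, where g = "\<lambda>p. s (x p) (v p)" and I = "{..<n}"]
    by (simp add: inner_U_eta_eq_sum_landau_pair_flux)
  finally have entropy: "0 \<le> (\<Sum>p<n. w p * (s (x p) (v p) \<bullet> U_eta n x v w \<psi> \<gamma> s p))"
    by simp
  show ?thesis
    using momentum energy entropy nu_nonneg by simp
qed

end
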